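(* Let $f$ and $g$ be Boolean functions with $var(f)\cap var(g)=\emptyset$, and let $a$ be a truth assignment to a superset of $var(f)\cup var(g)$. Then $\textit{SR}(f\wedge g,a)=\{t\wedge t'\mid t\in\textit{SR}(f,a),\ t'\in\textit{SR}(g,a)\}$.
   Context: A term is a conjunction of literals; $t$ is an implicant of $f$ if $t\models f$, and a prime implicant if no term obtained from $t$ by deleting one literal is an implicant of $f$. $var(f)$ is the set of variables of $f$. For a Boolean function $f$ and an assignment $a$ to a superset of $var(f)$, $\textit{SR}(f,a)$ denotes the set of prime implicants of $f$ that are satisfied by $a$ (the sufficient reasons for $a$ given $f$ when $a$ satisfies $f$). *)

theory Defs
  imports Main
begin

text \<open>Boolean functions over variables of type 'v are predicates on total truth
assignments 'v => bool. A literal is a pair (x, b): x if b, the negation of x otherwise.\<close>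

type_synonym 'v assignment = "'v \<Rightarrow> bool"
type_synonym 'v boolfun = "'v assignment \<Rightarrow> bool"
type_synonym 'v literal = "'v \<times> bool"

definition var :: "'v boolfun \<Rightarrow> 'v set" where
  "var f = {x. \<exists>a. f a \<noteq> f (a(x := \<not> a x))}"

text \<open>A term is a (finite, consistent) conjunction of literals, represented by its set of literals.\<close>
definition is_term :: "'v literal set \<Rightarrow> bool" where
  "is_term t \<longleftrightarrow> finite t \<and> (\<forall>x. \<not> ((x, True) \<in> t \<and> (x, False) \<in> t))"

definition sat_term :: "'v assignment \<Rightarrow> 'v literal set \<Rightarrow> bool" where
  "sat_term a t \<longleftrightarrow> (\<forall>(x, b) \<in> t. a x = b)"

definition implicant :: "'v literal set \<Rightarrow> 'v boolfun \<Rightarrow> bool" where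
  "implicant t f \<longleftrightarrow> is_term t \<and> (\<forall>a. sat_term a t \<longrightarrow> f a)"

definition prime_implicant :: "'v literal set \<Rightarrow> 'v boolfun \<Rightarrow> bool" where
  "prime_implicant t f \<longleftrightarrow> implicant t f \<and> (\<forall>l \<in> t. \<not> implicant (t - {l}) f)"

definition SR :: "'v boolfun \<Rightarrow> 'v assignment \<Rightarrow> 'v literal set set" where
  "SR f a = {t. prime_implicant t f \<and> sat_term a t}"

end

theory Submission
  imports Defs
begin

text \<open>Flipping a variable outside var f does not change f, so a literal on such a variable
can be deleted from any implicant of f. Hence prime implicants of f only mention variables
of var f, and the part of an implicant of f \<and> g on var f is an implicant of f. When
var f and var g are disjoint, every prime implicant of f \<and> g therefore splits into its
parts on var f and on var g, and deleting a literal affects only one part, so primality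
transfers in both directions.\<close>

definition restrict_term :: "'v set \<Rightarrow> 'v literal set \<Rightarrow> 'v literal set" where
  "restrict_term S t = {l \<in> t. fst l \<in> S}"

lemma fun_upd_notin_var: "x \<notin> var f \<Longrightarrow> f (a(x := v)) = f a"
  unfolding var_def by (cases "v = a x") (auto simp: fun_upd_idem)

lemma var_conj_subset: "var (\<lambda>a. f a \<and> g a) \<subseteq> var f \<union> var g"
  unfolding var_def by blast

lemma is_term_subset: "is_term t \<Longrightarrow> s \<subseteq> t \<Longrightarrow> is_term s"
  unfolding is_term_def by (auto intro: finite_subset)

lemma is_term_Un_disjoint_vars:
  assumes "is_term t" "is_term t'" "fst ` t \<inter> fst ` t' = {}"
  shows "is_term (t \<union> t')"
  using assms unfolding is_term_def by (auto simp: disjoint_iff) (metis fst_conv image_eqI)+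

lemma sat_term_Un: "sat_term a (t \<union> t') \<longleftrightarrow> sat_term a t \<and> sat_term a t'"
  unfolding sat_term_def by blast

lemma implicant_mono: "implicant t f \<Longrightarrow> (\<And>a. f a \<Longrightarrow> g a) \<Longrightarrow> implicant t g"
  unfolding implicant_def by blast

lemma implicant_conj_Un:
  "implicant t f \<Longrightarrow> implicant t' g \<Longrightarrow> is_term (t \<union> t') \<Longrightarrow>
    implicant (t \<union> t') (\<lambda>a. f a \<and> g a)"
  unfolding implicant_def sat_term_def by auto

lemma implicant_Diff_literal_notin_var:
  assumes t: "implicant t f" and x: "x \<notin> var f" and l: "(x, b) \<in> t"
  shows "implicant (t - {(x, b)}) f"
  unfolding implicant_def
proof (intro conjI allI impI)
  have is_term_t: "is_term t" using t unfolding implicant_def by blast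
  then show "is_term (t - {(x, b)})" by (rule is_term_subset) blast
  fix a assume sat: "sat_term a (t - {(x, b)})"
  have "(a(x := b)) y = c" if "(y, c) \<in> t" for y c
  proof (cases "y = x")
    case True
    then show ?thesis using is_term_t l that unfolding is_term_def by (cases b; cases c) auto
  next
    case False
    then show ?thesis using sat that unfolding sat_term_def by auto
  qed
  then have "sat_term (a(x := b)) t" unfolding sat_term_def by blast
  then have "f (a(x := b))" using t unfolding implicant_def by blast
  then show "f a" using fun_upd_notin_var[OF x] by simp
qed

lemma implicant_Diff_notin_var:
  assumes t: "implicant t f" and "L \<subseteq> t" and "fst ` L \<inter> var f = {}"
  shows "implicant (t - L) f"
proof -
  have "finite L"
    using assms(2) t unfolding implicant_def is_term_def by (auto intro: finite_subset)
  from this assms(2,3) show ?thesis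
  proof (induction L rule: finite_induct)
    case empty
    then show ?case using t by simp
  next
    case (insert l L)
    obtain x b where l: "l = (x, b)" by fastforce
    have "implicant (t - L) f" using insert by blast
    moreover have "x \<notin> var f" "(x, b) \<in> t - L" using insert l by auto
    ultimately have "implicant (t - L - {(x, b)}) f"
      by (rule implicant_Diff_literal_notin_var)
    moreover have "t - insert l L = t - L - {(x, b)}" using l by blast
    ultimately show ?case by simp
  qed
qed

lemma implicant_restrict_var:
  assumes "implicant t f"
  shows "implicant (restrict_term (var f) t) f"
proof -
  have "restrict_term (var f) t = t - {l \<in> t. fst l \<notin> var f}"
    unfolding restrict_term_def by blast
  then show ?thesis using implicant_Diff_notin_var[OF assms, of "{l \<in> t. fst l \<notin> var f}"]
    by auto
qed

lemma prime_implicant_vars: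
  assumes "prime_implicant t f"
  shows "fst ` t \<subseteq> var f"
proof
  fix x assume "x \<in> fst ` t"
  then obtain b where l: "(x, b) \<in> t" by auto
  have t: "implicant t f" using assms unfolding prime_implicant_def by blast
  show "x \<in> var f"
  proof (rule ccontr)
    assume "x \<notin> var f"
    with t l have "implicant (t - {(x, b)}) f" by (intro implicant_Diff_literal_notin_var)
    with assms l show False unfolding prime_implicant_def by blast
  qed
qed

lemma prime_implicant_conj_eq_Un_restrict:
  assumes "prime_implicant t (\<lambda>a. f a \<and> g a)"
  shows "t = restrict_term (var f) t \<union> restrict_term (var g) t"
  using prime_implicant_vars[OF assms] var_conj_subset[of f g]
  unfolding restrict_term_def by force

lemma prime_implicant_conj_restrict:
  assumes disj: "var f \<inter> var g = {}" and prime: "prime_implicant t (\<lambda>a. f a \<and> g a)"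
  shows "prime_implicant (restrict_term (var f) t) f"
  unfolding prime_implicant_def
proof (intro conjI ballI notI)
  have t: "implicant t (\<lambda>a. f a \<and> g a)" using prime unfolding prime_implicant_def by blast
  then show "implicant (restrict_term (var f) t) f"
    by (intro implicant_restrict_var implicant_mono[OF t]) simp
  have tg: "implicant (restrict_term (var g) t) g"
    by (intro implicant_restrict_var implicant_mono[OF t]) simp
  fix l assume l: "l \<in> restrict_term (var f) t"
    and drop: "implicant (restrict_term (var f) t - {l}) f"
  have "t - {l} = (restrict_term (var f) t - {l}) \<union> restrict_term (var g) t"
    using prime_implicant_conj_eq_Un_restrict[OF prime] l disj
    unfolding restrict_term_def by blast
  moreover have "is_term (t - {l})"
    using t unfolding implicant_def by (auto intro: is_term_subset)
  ultimately have "implicant (t - {l}) (\<lambda>a. f a \<and> g a)"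
    using implicant_conj_Un[OF drop tg] by simp
  then show False using prime l unfolding prime_implicant_def restrict_term_def by blast
qed

lemma prime_implicant_conj_Un:
  assumes disj: "var f \<inter> var g = {}"
    and t: "prime_implicant t f" and t': "prime_implicant t' g"
  shows "prime_implicant (t \<union> t') (\<lambda>a. f a \<and> g a)"
  unfolding prime_implicant_def
proof (intro conjI ballI notI)
  have vars: "fst ` t \<subseteq> var f" "fst ` t' \<subseteq> var g"
    using t t' by (auto dest: prime_implicant_vars)
  have "is_term (t \<union> t')"
    using t t' vars disj by (intro is_term_Un_disjoint_vars) (auto simp: prime_implicant_def implicant_def)
  then show "implicant (t \<union> t') (\<lambda>a. f a \<and> g a)"
    using t t' by (intro implicant_conj_Un) (auto simp: prime_implicant_def)
  fix l assume l: "l \<in> t \<union> t'" and drop: "implicant (t \<union> t' - {l}) (\<lambda>a. f a \<and> g a)"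
  have "restrict_term (var f) (t \<union> t' - {l}) = t - {l}"
    "restrict_term (var g) (t \<union> t' - {l}) = t' - {l}"
    using vars disj unfolding restrict_term_def by auto
  moreover have "implicant (restrict_term (var f) (t \<union> t' - {l})) f"
    "implicant (restrict_term (var g) (t \<union> t' - {l})) g"
    by (intro implicant_restrict_var implicant_mono[OF drop]; simp)+
  ultimately have "implicant (t - {l}) f" "implicant (t' - {l}) g" by simp_all
  with l t t' show False unfolding prime_implicant_def by blast
qed

lemma prime_implicant_conj_iff:
  assumes "var f \<inter> var g = {}"
  shows "prime_implicant s (\<lambda>a. f a \<and> g a) \<longleftrightarrow>
    (\<exists>t t'. s = t \<union> t' \<and> prime_implicant t f \<and> prime_implicant t' g)"
proof
  assume prime: "prime_implicant s (\<lambda>a. f a \<and> g a)"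
  then have "prime_implicant s (\<lambda>a. g a \<and> f a)" by (simp add: conj_commute)
  then have "prime_implicant (restrict_term (var g) s) g"
    using assms prime_implicant_conj_restrict by (metis inf_commute)
  moreover have "prime_implicant (restrict_term (var f) s) f"
    using assms prime by (rule prime_implicant_conj_restrict)
  ultimately show "\<exists>t t'. s = t \<union> t' \<and> prime_implicant t f \<and> prime_implicant t' g"
    using prime_implicant_conj_eq_Un_restrict[OF prime] by blast
qed (use assms prime_implicant_conj_Un in blast)

theorem proposition14:
  fixes f g :: "'v boolfun" and a :: "'v assignment"
  assumes "finite (var f)" and "finite (var g)"
    and "var f \<inter> var g = {}"
  shows "SR (\<lambda>b. f b \<and> g b) a = {t \<union> t' | t t'. t \<in> SR f a \<and> t' \<in> SR g a}"
  unfolding SR_def prime_implicant_conj_iff[OF assms(3)] by (auto simp: sat_term_Un) blast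

end
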